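(* Assume the setting below, with each $U_i$ bounded, connected, of positive mass $P(U_i)>0$ and $U_i\neq\mathcal X$, with unique global minimisers of all quality functions, and with all clusterings of each $U_i$ having connected clusters. Then for every $\gamma\ge0$, $$\mathrm{InStab}_{\mathrm{Mapper}}(\{Q^i_{n_i}\}_{i=1}^t,n,P)\le2\Big(P(T_\gamma(f))+P\big(D_\partial(f^n,f)>\gamma\big)+P(n_i=0)\Big),$$ where $P(D_\partial(f^n,f)>\gamma)$ is the probability (over $X\sim P^n$) that the optimal empirical Mapper function satisfies $D_\partial(f^n,f)>\gamma$, and $P(n_i=0)$ is the probability that $n_i=0$ for some $i\in\{1,\dots,t\}$.
   Context: $(\mathcal X,D)$ is a metric space with Borel probability measure $P$, covered by $U_1,\dots,U_t$. For each $i$ fix a finite label set $L_i=\{c^i_1,\dots,c^i_s\}$ (pairwise disjoint). A clustering of $U_i$ is a map $U_i\to L_i$ up to label permutation; $\mathcal F^i$ is the set of these. A Mapper function with components $f_1,\dots,f_t$ is $f(x)=\{f_i(x):x\in U_i\}$. Boundaries: for $A\subseteq U_i$, $\partial A=\{x\in\overline{U_i}:D(x,A)=D(x,\mathcal X\setminus A)=0\}$ with $D(x,A)=\inf_{y\in A}D(x,y)$; $\partial(f_i)=\bigcup_j\partial(f_i^{-1}(c^i_j))\cup\partial U_i$ ($\partial U_i$ the boundary in $\mathcal X$); tubes $T_\gamma(f_i)=\{x\in U_i:D(x,\partial(f_i))\le\gamma\}$ for $\gamma>0$, $T_0(f_i)=\partial(f_i)$, $T_\gamma(f)=\bigcup_iT_\gamma(f_i)$.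 Write $g_i\triangleleft T_\gamma(f_i)$ if for all $x,y\in U_i\setminus T_\gamma(f_i)$, $f_i(x)=f_i(y)\iff g_i(x)=g_i(y)$, and $g\triangleleft T_\gamma(f)$ if this holds for all $i$; $D_\partial(f,g)=\inf\{\gamma>0:f\triangleleft T_\gamma(g),\ g\triangleleft T_\gamma(f)\}$ (clusterings that agree up to permutation off the boundaries are identified). Quality functions: $P_i=P(\cdot\cap U_i)/P(U_i)$. $Q^i:\mathcal F^i\times M_1(U_i)\to\mathbb R$ ($M_1(U_i)$ = Borel probability measures on $U_i$) has a unique global minimiser $f_i$ of $Q^i(\cdot,P_i)$; the optimal Mapper function $f$ has components $f_i$. For $m\ge1$, $Q^i_m$ assigns a real number to each clustering of an $m$-point sample $Y\in U_i^m$ (order-independent) and has a unique minimiser $C^i_m(Y)$; $C^i_0$ is constant. For $X=(X_1,\dots,X_n)\sim P^n$, $X^i$ is the subsample of points lying in $U_i$, $n_i$ its size, and the optimal empirical Mapper function $f^n$ has components $f^n_i=C^i_{n_i}(X^i)$, extended to all of $U_i$ by Voronoi cells (a point gets the label of the nearest sample point, ties broken by smallest index). Instability: for Mapper functions $f,g$ and points $Y_1,\dots,Y_m$, $D_M(f,g)=\min_\pi\frac1m\sum_{j=1}^m\mathbf 1[f(Y_j)\neq\pi g(Y_j)]$, where $\pi=(\pi^1,\dots,\pi^t)$ with $\pi^i$ a permutation of $L_i$ acting label-wise. $\mathrm{InStab}_{\mathrm{Mapper}}(\{Q^i_{n_i}\}_{i=1}^t,n,P)$ is the expectation, over independent $X',X''\sim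 P^n$, of $D_M$ evaluated on the $2n$ points of $(X',X'')$ between the (Voronoi-extended) optimal empirical Mapper functions of $X'$ and of $X''$; this is assumed to be a random variable. *)

theory Defs
  imports "HOL-Probability.Probability" "HOL-Combinatorics.Permutations"
begin

definition Dist :: "'a::metric_space \<Rightarrow> 'a set \<Rightarrow> ereal" where
  "Dist x A = (if A = {} then \<infinity> else ereal (infdist x A))"

definition cluster_equiv :: "'l set \<Rightarrow> 'b set \<Rightarrow> ('b \<Rightarrow> 'l) \<Rightarrow> ('b \<Rightarrow> 'l) \<Rightarrow> bool" where
  "cluster_equiv L V g h \<longleftrightarrow> (\<exists>\<pi>. \<pi> permutes L \<and> (\<forall>x\<in>V. g x = \<pi> (h x)))"

definition clusterings :: "'a::topological_space set \<Rightarrow> 'l set \<Rightarrow> ('a \<Rightarrow> 'l) set" where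
  "clusterings V L = {g \<in> V \<rightarrow>\<^sub>E L. \<forall>c\<in>L. connected {x\<in>V. g x = c}}"

definition sample_clusterings :: "nat \<Rightarrow> 'l set \<Rightarrow> (nat \<Rightarrow> 'l) set" where
  "sample_clusterings m L = {..<m} \<rightarrow>\<^sub>E L"

definition cond_measure :: "'a measure \<Rightarrow> 'a set \<Rightarrow> 'a measure" where
  "cond_measure P V = scale_measure (ennreal (1 / measure P V)) (restrict_space P V)"

definition mapper :: "(nat \<Rightarrow> 'a set) \<Rightarrow> nat \<Rightarrow> (nat \<Rightarrow> 'a \<Rightarrow> 'l) \<Rightarrow> 'a \<Rightarrow> 'l set" where
  "mapper U t F x = {F i x | i. i < t \<and> x \<in> U i}"

definition bdry :: "'a::metric_space set \<Rightarrow> 'a set \<Rightarrow> 'a set" where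
  "bdry V A = {x \<in> closure V. Dist x A = 0 \<and> Dist x (UNIV - A) = 0}"

definition cluster_bdry :: "'a::metric_space set \<Rightarrow> 'l set \<Rightarrow> ('a \<Rightarrow> 'l) \<Rightarrow> 'a set" where
  "cluster_bdry V L g = (\<Union>c\<in>L. bdry V {x\<in>V. g x = c}) \<union> frontier V"

definition tube :: "'a::metric_space set \<Rightarrow> 'l set \<Rightarrow> ('a \<Rightarrow> 'l) \<Rightarrow> real \<Rightarrow> 'a set" where
  "tube V L g \<gamma> = (if \<gamma> = 0 then cluster_bdry V L g
                    else {x\<in>V. Dist x (cluster_bdry V L g) \<le> ereal \<gamma>})"

definition tube_map :: "(nat \<Rightarrow> 'a::metric_space set) \<Rightarrow> (nat \<Rightarrow> 'l set) \<Rightarrow> nat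
    \<Rightarrow> (nat \<Rightarrow> 'a \<Rightarrow> 'l) \<Rightarrow> real \<Rightarrow> 'a set" where
  "tube_map U L t F \<gamma> = (\<Union>i<t. tube (U i) (L i) (F i) \<gamma>)"

definition refines_off :: "(nat \<Rightarrow> 'a::metric_space set) \<Rightarrow> (nat \<Rightarrow> 'l set) \<Rightarrow> nat
    \<Rightarrow> (nat \<Rightarrow> 'a \<Rightarrow> 'l) \<Rightarrow> (nat \<Rightarrow> 'a \<Rightarrow> 'l) \<Rightarrow> real \<Rightarrow> bool" where
  "refines_off U L t G H \<gamma> \<longleftrightarrow>
     (\<forall>i<t. \<forall>x\<in>U i - tube (U i) (L i) (H i) \<gamma>. \<forall>y\<in>U i - tube (U i) (L i) (H i) \<gamma>.
        (H i x = H i y \<longleftrightarrow> G i x = G i y))"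

definition D_bdry :: "(nat \<Rightarrow> 'a::metric_space set) \<Rightarrow> (nat \<Rightarrow> 'l set) \<Rightarrow> nat
    \<Rightarrow> (nat \<Rightarrow> 'a \<Rightarrow> 'l) \<Rightarrow> (nat \<Rightarrow> 'a \<Rightarrow> 'l) \<Rightarrow> ereal" where
  "D_bdry U L t F G = Inf {ereal \<gamma> | \<gamma>. \<gamma> > 0 \<and> refines_off U L t F G \<gamma> \<and> refines_off U L t G F \<gamma>}"

text \<open>Label permutations pi = (pi^1,...,pi^t), as one permutation preserving each L i.\<close>
definition label_perms :: "(nat \<Rightarrow> 'l set) \<Rightarrow> nat \<Rightarrow> ('l \<Rightarrow> 'l) set" where
  "label_perms L t = {\<pi>. \<pi> permutes (\<Union>i<t. L i) \<and> (\<forall>i<t. \<pi> ` L i = L i)}"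

definition D_M :: "(nat \<Rightarrow> 'a set) \<Rightarrow> (nat \<Rightarrow> 'l set) \<Rightarrow> nat
    \<Rightarrow> (nat \<Rightarrow> 'a \<Rightarrow> 'l) \<Rightarrow> (nat \<Rightarrow> 'a \<Rightarrow> 'l) \<Rightarrow> 'a list \<Rightarrow> real" where
  "D_M U L t F G ys = Min ((\<lambda>\<pi>. real (card {j. j < length ys \<and>
        mapper U t F (ys ! j) \<noteq> \<pi> ` mapper U t G (ys ! j)}) / real (length ys)) ` label_perms L t)"

definition sub_sample :: "(nat \<Rightarrow> 'a set) \<Rightarrow> nat \<Rightarrow> nat \<Rightarrow> (nat \<Rightarrow> 'a) \<Rightarrow> 'a list" where
  "sub_sample U i n X = filter (\<lambda>x. x \<in> U i) (map X [0..<n])"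

definition voronoi :: "'a::metric_space list \<Rightarrow> (nat \<Rightarrow> 'l) \<Rightarrow> 'a \<Rightarrow> 'l" where
  "voronoi ys c x = c (LEAST j. j < length ys \<and> (\<forall>k<length ys. dist x (ys ! j) \<le> dist x (ys ! k)))"

text \<open>Optimal empirical Mapper function f^n; C i ys is the optimal clustering of the
  sample ys (m \<ge> 1), and c0 i the constant label of C^i_0.\<close>
definition emp_mapper :: "(nat \<Rightarrow> 'a::metric_space set) \<Rightarrow> (nat \<Rightarrow> 'a list \<Rightarrow> nat \<Rightarrow> 'l)
    \<Rightarrow> (nat \<Rightarrow> 'l) \<Rightarrow> nat \<Rightarrow> (nat \<Rightarrow> 'a) \<Rightarrow> nat \<Rightarrow> 'a \<Rightarrow> 'l" where
  "emp_mapper U C c0 n X i = (let ys = sub_sample U i n X in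
      if ys = [] then (\<lambda>_. c0 i) else voronoi ys (C i ys))"

definition InStab :: "(nat \<Rightarrow> 'a::metric_space set) \<Rightarrow> (nat \<Rightarrow> 'l set) \<Rightarrow> nat
    \<Rightarrow> (nat \<Rightarrow> 'a list \<Rightarrow> nat \<Rightarrow> 'l) \<Rightarrow> (nat \<Rightarrow> 'l) \<Rightarrow> nat \<Rightarrow> 'a measure \<Rightarrow> real" where
  "InStab U L t C c0 n P =
     (\<integral>Z. (case Z of (X', X'') \<Rightarrow>
        D_M U L t (emp_mapper U C c0 n X') (emp_mapper U C c0 n X'')
            (map X' [0..<n] @ map X'' [0..<n]))
      \<partial>(PiM {..<n} (\<lambda>_. P) \<Otimes>\<^sub>M PiM {..<n} (\<lambda>_. P)))"

end

theory Submission
  imports Defs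
begin

(* Off the tube T_gamma(f), a clustering at boundary distance at most gamma from f induces on
   each U_i the same partition as f_i.  If both empirical Mapper functions are that close to f,
   their labels on each U_i therefore differ by a bijection of L_i, and since the label sets are
   disjoint these bijections glue to a single label permutation.  Hence D_M is at most the
   fraction of the 2n sample points lying in T_gamma(f), whose expectation is P(T_gamma(f)).
   Otherwise D_M <= 1, which by a union bound over the two samples has probability at most
   2 P(D_bdry(f^n, f) > gamma). *)

lemma ex_permutes_extending_inj_on:
  assumes "finite S" "inj_on p A" "A \<subseteq> S" "p ` A \<subseteq> S"
  shows "\<exists>\<pi>. \<pi> permutes S \<and> (\<forall>x\<in>A. \<pi> x = p x)"
proof -
  have "finite A"
    using assms(1,3) by (rule finite_subset[rotated])
  then have "card (S - A) = card (S - p ` A)"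
    using assms by (simp add: card_Diff_subset card_image)
  then obtain g where g: "bij_betw g (S - A) (S - p ` A)"
    using assms(1) by (meson finite_Diff finite_same_card_bij)
  define \<pi> where "\<pi> x = (if x \<in> A then p x else if x \<in> S then g x else x)" for x
  have "bij_betw \<pi> A (p ` A)"
    by (rule bij_betw_cong[THEN iffD2, of _ _ p]) (auto simp: \<pi>_def assms(2) bij_betw_imageI)
  moreover have "bij_betw \<pi> (S - A) (S - p ` A)"
    by (rule bij_betw_cong[THEN iffD2, OF _ g]) (auto simp: \<pi>_def)
  ultimately have "bij_betw \<pi> (A \<union> (S - A)) (p ` A \<union> (S - p ` A))"
    by (rule bij_betw_combine) auto
  then have "bij_betw \<pi> S S"
    using assms(3,4) by (simp add: Un_Diff_cancel Un_absorb1)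
  then have "\<pi> permutes S"
    by (rule bij_imp_permutes) (auto simp: \<pi>_def assms(3)[THEN subsetD])
  then show ?thesis by (auto simp: \<pi>_def)
qed

lemma ex_permutes_of_same_partition:
  assumes "finite L" "g ` W \<subseteq> L" "h ` W \<subseteq> L"
    and same: "\<And>x y. x \<in> W \<Longrightarrow> y \<in> W \<Longrightarrow> g x = g y \<longleftrightarrow> h x = h y"
  shows "\<exists>\<pi>. \<pi> permutes L \<and> (\<forall>x\<in>W. \<pi> (h x) = g x)"
proof -
  define p where "p = g \<circ> inv_into W h"
  have p_h: "p (h x) = g x" if "x \<in> W" for x
    using same[of "inv_into W h (h x)" x] that by (simp add: p_def inv_into_into f_inv_into_f)
  have "inj_on p (h ` W)"
  proof (rule inj_onI)
    fix a b assume "a \<in> h ` W" "b \<in> h ` W" "p a = p b"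
    then obtain x y where "x \<in> W" "y \<in> W" "a = h x" "b = h y" "g x = g y"
      using p_h by auto
    then show "a = b" using same by blast
  qed
  moreover have "p ` h ` W \<subseteq> L"
    using p_h assms(2) by auto
  ultimately obtain \<pi> where "\<pi> permutes L" "\<forall>a\<in>h ` W. \<pi> a = p a"
    using ex_permutes_extending_inj_on[OF assms(1) _ assms(3)] by blast
  then show ?thesis using p_h by auto
qed

lemma ex_permutes_UN_disjoint:
  fixes t :: nat
  assumes "\<And>i. i < t \<Longrightarrow> ps i permutes L i"
    and "\<And>i j. i < t \<Longrightarrow> j < t \<Longrightarrow> i \<noteq> j \<Longrightarrow> L i \<inter> L j = {}"
  shows "\<exists>\<pi>. \<pi> permutes (\<Union>i<t. L i) \<and> (\<forall>i<t. \<forall>x\<in>L i. \<pi> x = ps i x)"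
  using assms
proof (induction t)
  case 0
  have "id permutes (\<Union>i<0. L i)" by (rule permutes_id)
  then show ?case by blast
next
  case (Suc t)
  have "\<exists>\<pi>. \<pi> permutes (\<Union>i<t. L i) \<and> (\<forall>i<t. \<forall>x\<in>L i. \<pi> x = ps i x)"
  proof (rule Suc.IH)
    show "ps i permutes L i" if "i < t" for i
      using Suc.prems(1) that by simp
    show "L i \<inter> L j = {}" if "i < t" "j < t" "i \<noteq> j" for i j
      using Suc.prems(2) that by simp
  qed
  then obtain \<pi> where \<pi>: "\<pi> permutes (\<Union>i<t. L i)" "\<forall>i<t. \<forall>x\<in>L i. \<pi> x = ps i x"
    by blast
  have "L t \<inter> L i = {}" if "i < t" for i
    using Suc.prems(2)[of t i] that by simp
  then have new: "L t \<inter> (\<Union>i<t. L i) = {}"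
    by blast
  have "ps t \<circ> \<pi> permutes (\<Union>i<Suc t. L i)"
  proof (rule permutes_compose)
    show "\<pi> permutes (\<Union>i<Suc t. L i)"
      using \<pi>(1) by (rule permutes_subset) (simp add: lessThan_Suc)
    show "ps t permutes (\<Union>i<Suc t. L i)"
      using Suc.prems(1)[of t] by (rule permutes_subset) (simp_all add: lessThan_Suc)
  qed
  moreover have "(ps t \<circ> \<pi>) x = ps i x" if "i < Suc t" "x \<in> L i" for i x
  proof (cases "i = t")
    case True
    then have "x \<notin> (\<Union>i<t. L i)" using that(2) new by blast
    then show ?thesis using True permutes_not_in[OF \<pi>(1)] by simp
  next
    case False
    then have "i < t" using that by simp
    then have "ps i x \<in> L i" using Suc.prems(1) that(2) by (simp add: permutes_in_image)
    then have "ps i x \<notin> L t" using new \<open>i < t\<close> by blast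
    then show ?thesis using \<pi>(2) \<open>i < t\<close> that(2) permutes_not_in[OF Suc.prems(1)[of t]] by simp
  qed
  ultimately show ?case by blast
qed

lemma ex_label_perms_extending:
  assumes "\<forall>i<t. ps i permutes L i" and "\<forall>i<t. \<forall>j<t. i \<noteq> j \<longrightarrow> L i \<inter> L j = {}"
  shows "\<exists>\<pi>\<in>label_perms L t. \<forall>i<t. \<forall>x\<in>L i. \<pi> x = ps i x"
proof -
  obtain \<pi> where \<pi>: "\<pi> permutes (\<Union>i<t. L i)" "\<forall>i<t. \<forall>x\<in>L i. \<pi> x = ps i x"
    using ex_permutes_UN_disjoint[of t ps L] assms by blast
  have image: "\<pi> ` L i = L i" if "i < t" for i
  proof -
    have "\<pi> ` L i = ps i ` L i" using \<pi>(2) that by (simp cong: image_cong)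
    also have "\<dots> = L i" using assms(1) that by (simp add: permutes_image)
    finally show ?thesis .
  qed
  show ?thesis
    unfolding label_perms_def using \<pi> image by blast
qed

lemma Dist_eq_0_iff: "Dist x A = 0 \<longleftrightarrow> x \<in> closure A"
  by (cases "A = {}") (auto simp: Dist_def in_closure_iff_infdist_zero)

lemma Dist_pos_if_not_in_closed:
  assumes "closed A" "x \<notin> A"
  shows "Dist x A > 0"
  using infdist_pos_not_in_closed[OF assms(1) _ assms(2)] by (auto simp: Dist_def)

lemma closed_cluster_bdry:
  assumes "finite L"
  shows "closed (cluster_bdry V L g)"
proof -
  have "bdry V A = closure V \<inter> closure A \<inter> closure (UNIV - A)" for A
    by (auto simp: bdry_def Dist_eq_0_iff)
  then show ?thesis
    unfolding cluster_bdry_def using assms by (intro closed_Un closed_UN) auto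
qed

lemma Dist_cluster_bdry_gt_if_not_in_tube:
  assumes "finite L" "\<gamma> \<ge> 0" "x \<in> V - tube V L g \<gamma>"
  shows "Dist x (cluster_bdry V L g) > ereal \<gamma>"
proof (cases "\<gamma> = 0")
  case True
  then have "x \<notin> cluster_bdry V L g"
    using assms(3) by (simp add: tube_def)
  then show ?thesis
    using Dist_pos_if_not_in_closed[OF closed_cluster_bdry[OF assms(1)]] True
    by (simp add: zero_ereal_def)
next
  case False
  then show ?thesis using assms(3) by (auto simp: tube_def)
qed

lemma sets_borel_tube:
  assumes "V \<in> sets borel" "finite L"
  shows "tube V L g \<gamma> \<in> sets borel"
proof -
  let ?B = "cluster_bdry V L g"
  consider "\<gamma> = 0" | "\<gamma> \<noteq> 0" "?B = {}" | "\<gamma> \<noteq> 0" "?B \<noteq> {}" by blast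
  then show ?thesis
  proof cases
    case 1
    then show ?thesis using borel_closed[OF closed_cluster_bdry[OF assms(2)]] by (simp add: tube_def)
  next
    case 2
    then show ?thesis by (simp add: tube_def Dist_def)
  next
    case 3
    then have "tube V L g \<gamma> = V \<inter> {x. infdist x ?B \<le> \<gamma>}"
      by (auto simp: tube_def Dist_def)
    moreover have "closed {x. infdist x ?B \<le> \<gamma>}"
      by (intro closed_Collect_le continuous_intros)
    ultimately show ?thesis using assms(1) by auto
  qed
qed

text \<open>Off the \<open>\<gamma>\<close>-tube the boundary is at distance \<open>> \<gamma>\<close>, so a witness \<open>\<delta>\<close> of
  \<open>D_bdry \<le> \<gamma>\<close> can be chosen so small that both points are also off the \<open>\<delta>\<close>-tube.\<close>
lemma refines_off_if_D_bdry_le: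
  assumes D: "D_bdry U L t E f \<le> ereal \<gamma>" and "\<gamma> \<ge> 0" and fin: "\<forall>i<t. finite (L i)"
  shows "refines_off U L t E f \<gamma>"
  unfolding refines_off_def
proof (intro allI impI ballI)
  fix i x y
  assume i: "i < t" and x: "x \<in> U i - tube (U i) (L i) (f i) \<gamma>"
    and y: "y \<in> U i - tube (U i) (L i) (f i) \<gamma>"
  let ?B = "cluster_bdry (U i) (L i) (f i)"
  have "ereal \<gamma> < Dist x ?B" "ereal \<gamma> < Dist y ?B"
    using Dist_cluster_bdry_gt_if_not_in_tube[OF fin[rule_format, OF i] \<open>\<gamma> \<ge> 0\<close>] x y by blast+
  then have "ereal \<gamma> < min (Dist x ?B) (Dist y ?B)"
    by simp
  then obtain r where r: "ereal \<gamma> < ereal r" "ereal r < min (Dist x ?B) (Dist y ?B)"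
    using ereal_dense2 by blast
  then have "D_bdry U L t E f < ereal r"
    using D by order
  then obtain \<delta> where \<delta>: "\<delta> > 0" "refines_off U L t E f \<delta>" "ereal \<delta> < ereal r"
    unfolding D_bdry_def Inf_less_iff by blast
  have "ereal \<delta> < min (Dist x ?B) (Dist y ?B)"
    using \<delta>(3) r(2) by order
  then have "x \<in> U i - tube (U i) (L i) (f i) \<delta>" "y \<in> U i - tube (U i) (L i) (f i) \<delta>"
    using x y \<delta>(1) by (auto simp: tube_def not_le)
  then show "f i x = f i y \<longleftrightarrow> E i x = E i y"
    using \<delta>(2) i unfolding refines_off_def by blast
qed

lemma ex_label_perm_mapper_eq_off_tube:
  assumes fin: "\<forall>i<t. finite (L i)" and disj: "\<forall>i<t. \<forall>j<t. i \<noteq> j \<longrightarrow> L i \<inter> L j = {}"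
    and E1: "\<And>i x. i < t \<Longrightarrow> x \<in> U i \<Longrightarrow> E1 i x \<in> L i"
    and E2: "\<And>i x. i < t \<Longrightarrow> x \<in> U i \<Longrightarrow> E2 i x \<in> L i"
    and r1: "refines_off U L t E1 f \<gamma>" and r2: "refines_off U L t E2 f \<gamma>"
  shows "\<exists>\<pi>\<in>label_perms L t. \<forall>z. z \<notin> tube_map U L t f \<gamma> \<longrightarrow> mapper U t E1 z = \<pi> ` mapper U t E2 z"
proof -
  define W where "W i = U i - tube (U i) (L i) (f i) \<gamma>" for i
  have "\<forall>i\<in>{..<t}. \<exists>p. p permutes L i \<and> (\<forall>x\<in>W i. p (E2 i x) = E1 i x)"
  proof
    fix i assume "i \<in> {..<t}"
    then have i: "i < t" by simp
    show "\<exists>p. p permutes L i \<and> (\<forall>x\<in>W i. p (E2 i x) = E1 i x)"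
    proof (rule ex_permutes_of_same_partition)
      show "finite (L i)" using fin i by blast
      show "E1 i ` W i \<subseteq> L i" "E2 i ` W i \<subseteq> L i" using E1 E2 i by (auto simp: W_def)
      show "E1 i x = E1 i y \<longleftrightarrow> E2 i x = E2 i y" if "x \<in> W i" "y \<in> W i" for x y
        using r1 r2 i that unfolding refines_off_def W_def by blast
    qed
  qed
  from bchoice[OF this] obtain ps
    where ps: "\<And>i. i < t \<Longrightarrow> ps i permutes L i \<and> (\<forall>x\<in>W i. ps i (E2 i x) = E1 i x)"
    by auto
  obtain \<pi> where "\<pi> \<in> label_perms L t" and \<pi>: "\<forall>i<t. \<forall>x\<in>L i. \<pi> x = ps i x"
    using ex_label_perms_extending[of t ps L] ps disj by blast
  moreover have "mapper U t E1 z = \<pi> ` mapper U t E2 z" if z: "z \<notin> tube_map U L t f \<gamma>" for z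
  proof -
    have E1_eq: "E1 i z = \<pi> (E2 i z)" if "i < t" "z \<in> U i" for i
    proof -
      have "z \<in> W i" using z that by (auto simp: W_def tube_map_def)
      then show ?thesis using \<pi> ps E2 that by auto
    qed
    have "{E1 i z | i. i < t \<and> z \<in> U i} = {\<pi> (E2 i z) | i. i < t \<and> z \<in> U i}"
      using E1_eq by metis
    also have "\<dots> = \<pi> ` {E2 i z | i. i < t \<and> z \<in> U i}"
      by auto
    finally show ?thesis
      unfolding mapper_def .
  qed
  ultimately show ?thesis by blast
qed

lemma finite_label_perms:
  assumes "\<forall>i<t. finite (L i)"
  shows "finite (label_perms L t)"
proof -
  have "finite {p. p permutes (\<Union>i<t. L i)}"
    using assms by (intro finite_permutations) auto
  then show ?thesis by (rule finite_subset[rotated]) (auto simp: label_perms_def)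
qed

lemma D_M_le:
  assumes "\<forall>i<t. finite (L i)" "\<pi> \<in> label_perms L t"
  shows "D_M U L t F G ys \<le> real (card {j. j < length ys \<and>
        mapper U t F (ys ! j) \<noteq> \<pi> ` mapper U t G (ys ! j)}) / real (length ys)"
  unfolding D_M_def using assms finite_label_perms[OF assms(1)] by (intro Min_le) auto

lemma D_M_le_1:
  assumes "\<forall>i<t. finite (L i)"
  shows "D_M U L t F G ys \<le> 1"
proof -
  have "id \<in> label_perms L t"
    by (simp add: label_perms_def permutes_id)
  then have "D_M U L t F G ys \<le> real (card {j. j < length ys \<and>
        mapper U t F (ys ! j) \<noteq> id ` mapper U t G (ys ! j)}) / real (length ys)"
    by (rule D_M_le[OF assms])
  also have "\<dots> \<le> 1"
  proof -
    have "card {j. j < length ys \<and> mapper U t F (ys ! j) \<noteq> id ` mapper U t G (ys ! j)}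
        \<le> card {..<length ys}"
      by (intro card_mono) auto
    then show ?thesis by (simp add: divide_le_eq_1)
  qed
  finally show ?thesis .
qed

lemma D_M_le_fraction_if_perm_agrees_off:
  assumes "\<forall>i<t. finite (L i)" "\<pi> \<in> label_perms L t"
    and "\<forall>z. z \<notin> T \<longrightarrow> mapper U t F z = \<pi> ` mapper U t G z"
  shows "D_M U L t F G ys \<le> real (length (filter (\<lambda>y. y \<in> T) ys)) / real (length ys)"
proof -
  have "card {j. j < length ys \<and> mapper U t F (ys ! j) \<noteq> \<pi> ` mapper U t G (ys ! j)}
      \<le> card {j. j < length ys \<and> ys ! j \<in> T}"
    using assms(3) by (intro card_mono) auto
  then show ?thesis
    using D_M_le[OF assms(1,2), of U F G ys]
    by (simp add: length_filter_conv_card divide_right_mono order_trans)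
qed

lemma voronoi_in_image:
  assumes "ys \<noteq> []"
  shows "voronoi ys c x \<in> c ` {..<length ys}"
proof -
  let ?nearest = "\<lambda>j. j < length ys \<and> (\<forall>k<length ys. dist x (ys ! j) \<le> dist x (ys ! k))"
  obtain j where "is_arg_min (\<lambda>k. dist x (ys ! k)) (\<lambda>k. k \<in> {..<length ys}) j"
    using ex_is_arg_min_if_finite[of "{..<length ys}"] assms by blast
  then have "?nearest j"
    unfolding is_arg_min_def by (meson lessThan_iff not_le)
  then have "?nearest (LEAST j. ?nearest j)"
    by (rule LeastI)
  then show ?thesis
    unfolding voronoi_def by blast
qed

lemma emp_mapper_in_labels:
  assumes "c0 i \<in> L i"
    and "\<And>Y. Y \<noteq> [] \<Longrightarrow> set Y \<subseteq> U i \<Longrightarrow> C i Y \<in> sample_clusterings (length Y) (L i)"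
  shows "emp_mapper U C c0 n X i x \<in> L i"
proof (cases "sub_sample U i n X = []")
  case True
  then show ?thesis using assms(1) by (simp add: emp_mapper_def)
next
  case False
  define ys where "ys = sub_sample U i n X"
  have "set ys \<subseteq> U i"
    by (auto simp: ys_def sub_sample_def)
  then have "C i ys ` {..<length ys} \<subseteq> L i"
    using assms(2) False by (auto simp: ys_def sample_clusterings_def)
  moreover have "voronoi ys (C i ys) x \<in> C i ys ` {..<length ys}"
    using False by (simp add: ys_def voronoi_in_image)
  moreover have "emp_mapper U C c0 n X i = voronoi ys (C i ys)"
    using False by (simp add: emp_mapper_def ys_def Let_def)
  ultimately show ?thesis
    by auto
qed

lemma D_M_le_tube_fraction:
  assumes fin: "\<forall>i<t. finite (L i)" and disj: "\<forall>i<t. \<forall>j<t. i \<noteq> j \<longrightarrow> L i \<inter> L j = {}"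
    and E1: "\<And>i x. i < t \<Longrightarrow> x \<in> U i \<Longrightarrow> E1 i x \<in> L i"
    and E2: "\<And>i x. i < t \<Longrightarrow> x \<in> U i \<Longrightarrow> E2 i x \<in> L i"
    and D1: "D_bdry U L t E1 f \<le> ereal \<gamma>" and D2: "D_bdry U L t E2 f \<le> ereal \<gamma>" and "\<gamma> \<ge> 0"
  shows "D_M U L t E1 E2 ys
    \<le> real (length (filter (\<lambda>y. y \<in> tube_map U L t f \<gamma>) ys)) / real (length ys)"
proof -
  obtain \<pi> where "\<pi> \<in> label_perms L t"
    "\<forall>z. z \<notin> tube_map U L t f \<gamma> \<longrightarrow> mapper U t E1 z = \<pi> ` mapper U t E2 z"
    using ex_label_perm_mapper_eq_off_tube[OF fin disj E1 E2
        refines_off_if_D_bdry_le[OF D1 \<open>\<gamma> \<ge> 0\<close> fin] refines_off_if_D_bdry_le[OF D2 \<open>\<gamma> \<ge> 0\<close> fin]]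
    by blast
  then show ?thesis
    by (rule D_M_le_fraction_if_perm_agrees_off[OF fin])
qed

definition empirical_freq :: "'a set \<Rightarrow> nat \<Rightarrow> (nat \<Rightarrow> 'a) \<Rightarrow> real" where
  "empirical_freq T n X = (\<Sum>j<n. indicator T (X j)) / real n"

lemma empirical_freq_nonneg: "0 \<le> empirical_freq T n X"
  by (simp add: empirical_freq_def sum_nonneg)

lemma length_filter_map_upt:
  "real (length (filter (\<lambda>y. y \<in> T) (map X [0..<n]))) = (\<Sum>j<n. indicator T (X j))"
  by (induction n) (auto simp: indicator_def)

lemma D_M_two_samples_le:
  fixes E :: "(nat \<Rightarrow> 'a::metric_space) \<Rightarrow> nat \<Rightarrow> 'a \<Rightarrow> 'l"
  assumes fin: "\<forall>i<t. finite (L i)" and disj: "\<forall>i<t. \<forall>j<t. i \<noteq> j \<longrightarrow> L i \<inter> L j = {}"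
    and E: "\<And>X i x. i < t \<Longrightarrow> x \<in> U i \<Longrightarrow> E X i x \<in> L i" and "\<gamma> \<ge> 0"
    and good: "\<And>X. X \<in> {X', X''} \<Longrightarrow> X \<notin> B \<Longrightarrow> D_bdry U L t (E X) f \<le> ereal \<gamma>"
  shows "D_M U L t (E X') (E X'') (map X' [0..<n] @ map X'' [0..<n])
    \<le> (empirical_freq (tube_map U L t f \<gamma>) n X' / 2 + indicator B X')
       + (empirical_freq (tube_map U L t f \<gamma>) n X'' / 2 + indicator B X'')"
proof (cases "X' \<in> B \<or> X'' \<in> B")
  case True
  then have "1 \<le> indicator B X' + (indicator B X'' :: real)"
    by (auto simp: indicator_def)
  moreover have "0 \<le> empirical_freq (tube_map U L t f \<gamma>) n X' / 2"
    "0 \<le> empirical_freq (tube_map U L t f \<gamma>) n X'' / 2"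
    by (simp_all add: empirical_freq_nonneg)
  ultimately show ?thesis
    using D_M_le_1[OF fin, of U "E X'" "E X''" "map X' [0..<n] @ map X'' [0..<n]"] by linarith
next
  case False
  let ?T = "tube_map U L t f \<gamma>"
  have "D_M U L t (E X') (E X'') (map X' [0..<n] @ map X'' [0..<n])
      \<le> real (length (filter (\<lambda>y. y \<in> ?T) (map X' [0..<n] @ map X'' [0..<n])))
        / real (length (map X' [0..<n] @ map X'' [0..<n]))"
    using False good by (intro D_M_le_tube_fraction[OF fin disj E E _ _ \<open>\<gamma> \<ge> 0\<close>]) auto
  also have "\<dots> = empirical_freq ?T n X' / 2 + empirical_freq ?T n X'' / 2"
    by (simp add: length_filter_map_upt[simplified] empirical_freq_def add_divide_distrib)
  finally show ?thesis
    using False by simp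
qed

lemma integral_PiM_component:
  fixes g :: "'b \<Rightarrow> real"
  assumes "\<And>i. i \<in> I \<Longrightarrow> prob_space (M i)" "i \<in> I" "g \<in> borel_measurable (M i)"
  shows "(\<integral>\<omega>. g (\<omega> i) \<partial>PiM I M) = integral\<^sup>L (M i) g"
  using integral_distr[OF measurable_component_singleton[OF assms(2), of M] assms(3)]
  by (simp add: distr_PiM_component assms)

lemma integrable_PiM_component:
  fixes g :: "'b \<Rightarrow> real"
  assumes "\<And>i. i \<in> I \<Longrightarrow> prob_space (M i)" "i \<in> I" "integrable (M i) g"
  shows "integrable (PiM I M) (\<lambda>\<omega>. g (\<omega> i))"
  using integrable_distr_eq[OF measurable_component_singleton[OF assms(2), of M]
      borel_measurable_integrable[OF assms(3)]]
  by (simp add: distr_PiM_component assms)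

lemma
  assumes "prob_space P" "T \<in> sets P"
  shows integrable_empirical_freq: "integrable (PiM {..<n} (\<lambda>_. P)) (empirical_freq T n)"
    and integral_empirical_freq_le: "(\<integral>X. empirical_freq T n X \<partial>PiM {..<n} (\<lambda>_. P)) \<le> measure P T"
proof -
  interpret P: prob_space P by fact
  have int: "integrable (PiM {..<n} (\<lambda>_. P)) (\<lambda>X. indicator T (X j) :: real)" if "j < n" for j
    using assms that P.emeasure_finite[of T]
    by (intro integrable_PiM_component integrable_real_indicator) (auto simp: less_top[symmetric])
  then show "integrable (PiM {..<n} (\<lambda>_. P)) (empirical_freq T n)"
    unfolding empirical_freq_def by (intro integrable_divide integrable_sum) auto
  have "(\<integral>X. indicator T (X j) \<partial>PiM {..<n} (\<lambda>_. P)) = measure P T" if "j < n" for j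
    using assms that sets.sets_into_space[OF assms(2)]
    by (subst integral_PiM_component) (auto simp: Int_absorb2)
  then show "(\<integral>X. empirical_freq T n X \<partial>PiM {..<n} (\<lambda>_. P)) \<le> measure P T"
    using int by (cases "n = 0") (simp_all add: empirical_freq_def)
qed

lemma (in prob_space) integral_pair_le_twice:
  fixes D :: "'a \<times> 'a \<Rightarrow> real" and w :: "'a \<Rightarrow> real"
  assumes w: "integrable M w" and w_nonneg: "\<And>x. x \<in> space M \<Longrightarrow> 0 \<le> w x"
    and D: "\<And>x y. x \<in> space M \<Longrightarrow> y \<in> space M \<Longrightarrow> D (x, y) \<le> w x + w y"
  shows "(\<integral>z. D z \<partial>(M \<Otimes>\<^sub>M M)) \<le> 2 * integral\<^sup>L M w"
proof -
  interpret MM: pair_prob_space M M ..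
  have w_meas[measurable]: "w \<in> borel_measurable M"
    using w by (rule borel_measurable_integrable)
  have "integrable (distr (M \<Otimes>\<^sub>M M) M fst) w"
    using w by (simp add: distr_pair_fst)
  then have int_fst: "integrable (M \<Otimes>\<^sub>M M) (\<lambda>z. w (fst z))"
    by (rule integrable_distr[rotated]) measurable
  have int_snd: "integrable (M \<Otimes>\<^sub>M M) (\<lambda>z. w (snd z))"
    using MM.integrable_product_swap[OF int_fst] by (simp add: case_prod_beta')
  have "(\<integral>z. w (fst z) \<partial>(M \<Otimes>\<^sub>M M)) = integral\<^sup>L (distr (M \<Otimes>\<^sub>M M) M fst) w"
    by (rule integral_distr[symmetric]) measurable
  also have "\<dots> = integral\<^sup>L M w"
    by (simp add: distr_pair_fst)
  finally have "(\<integral>z. w (fst z) \<partial>(M \<Otimes>\<^sub>M M)) = integral\<^sup>L M w" .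
  moreover have "(\<integral>z. w (snd z) \<partial>(M \<Otimes>\<^sub>M M)) = (\<integral>z. w (fst z) \<partial>(M \<Otimes>\<^sub>M M))"
    using MM.integral_product_swap[of "\<lambda>z. w (fst z)"] by (simp add: case_prod_beta')
  moreover have "(\<integral>z. D z \<partial>(M \<Otimes>\<^sub>M M)) \<le> (\<integral>z. w (fst z) + w (snd z) \<partial>(M \<Otimes>\<^sub>M M))"
    using int_fst int_snd D w_nonneg by (intro integral_mono') (auto simp: space_pair_measure)
  ultimately show ?thesis
    using int_fst int_snd by simp
qed

lemma integral_D_M_two_samples_le:
  fixes E :: "(nat \<Rightarrow> 'a::metric_space) \<Rightarrow> nat \<Rightarrow> 'a \<Rightarrow> 'l"
  assumes "prob_space P"
    and fin: "\<forall>i<t. finite (L i)" and disj: "\<forall>i<t. \<forall>j<t. i \<noteq> j \<longrightarrow> L i \<inter> L j = {}"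
    and E: "\<And>X i x. i < t \<Longrightarrow> x \<in> U i \<Longrightarrow> E X i x \<in> L i" and "\<gamma> \<ge> 0"
    and T_sets: "tube_map U L t f \<gamma> \<in> sets P"
    and B_sets: "{X \<in> space (PiM {..<n} (\<lambda>_. P)). D_bdry U L t (E X) f > ereal \<gamma>} \<in> sets (PiM {..<n} (\<lambda>_. P))"
  shows "(\<integral>Z. (case Z of (X', X'') \<Rightarrow> D_M U L t (E X') (E X'') (map X' [0..<n] @ map X'' [0..<n]))
           \<partial>(PiM {..<n} (\<lambda>_. P) \<Otimes>\<^sub>M PiM {..<n} (\<lambda>_. P)))
         \<le> measure P (tube_map U L t f \<gamma>) + 2 * measure (PiM {..<n} (\<lambda>_. P))
              {X \<in> space (PiM {..<n} (\<lambda>_. P)). D_bdry U L t (E X) f > ereal \<gamma>}"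
proof -
  define M where "M = PiM {..<n} (\<lambda>_. P)"
  interpret M: prob_space M
    unfolding M_def by (intro prob_space_PiM assms(1))
  define T where "T = tube_map U L t f \<gamma>"
  define B where "B = {X \<in> space M. D_bdry U L t (E X) f > ereal \<gamma>}"
  define w where "w X = empirical_freq T n X / 2 + indicator B X" for X
  have freq_int: "integrable M (empirical_freq T n)"
    unfolding M_def T_def by (rule integrable_empirical_freq[OF assms(1) T_sets])
  have B_int: "integrable M (indicator B :: _ \<Rightarrow> real)"
    using B_sets M.emeasure_finite[of B] by (simp add: B_def M_def less_top[symmetric])
  have "(\<integral>Z. (case Z of (X', X'') \<Rightarrow> D_M U L t (E X') (E X'') (map X' [0..<n] @ map X'' [0..<n]))
           \<partial>(M \<Otimes>\<^sub>M M)) \<le> 2 * integral\<^sup>L M w"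
  proof (rule M.integral_pair_le_twice)
    show "integrable M w"
      unfolding w_def using freq_int B_int by auto
    show "0 \<le> w X" for X
      by (simp add: w_def empirical_freq_nonneg)
    show "(case (X', X'') of (X', X'') \<Rightarrow> D_M U L t (E X') (E X'') (map X' [0..<n] @ map X'' [0..<n]))
        \<le> w X' + w X''" if "X' \<in> space M" "X'' \<in> space M" for X' X''
      unfolding w_def T_def using that
      by (simp, intro D_M_two_samples_le[OF fin disj E \<open>\<gamma> \<ge> 0\<close>]) (auto simp: B_def not_less)
  qed
  also have "2 * integral\<^sup>L M w \<le> measure P T + 2 * measure M B"
    using integral_empirical_freq_le[OF assms(1) T_sets, of n] freq_int B_int B_sets
    unfolding w_def by (simp add: B_def M_def T_def)
  finally show ?thesis
    unfolding M_def T_def B_def .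
qed

theorem theorem7p1:
  fixes P :: "'a::metric_space measure" and U :: "nat \<Rightarrow> 'a set" and t s n :: nat
    and L :: "nat \<Rightarrow> 'l set"
    and Q :: "nat \<Rightarrow> ('a \<Rightarrow> 'l) \<Rightarrow> 'a measure \<Rightarrow> real" and f :: "nat \<Rightarrow> 'a \<Rightarrow> 'l"
    and Qm :: "nat \<Rightarrow> 'a list \<Rightarrow> (nat \<Rightarrow> 'l) \<Rightarrow> real"
    and C :: "nat \<Rightarrow> 'a list \<Rightarrow> nat \<Rightarrow> 'l" and c0 :: "nat \<Rightarrow> 'l"
    and \<gamma> :: real
  assumes "prob_space P" and "sets P = sets borel"
    and "(\<Union>i<t. U i) = UNIV"
    and "\<forall>i<t. U i \<in> sets P \<and> bounded (U i) \<and> connected (U i) \<and> measure P (U i) > 0 \<and> U i \<noteq> UNIV"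
    and "\<forall>i<t. finite (L i) \<and> card (L i) = s"
    and "\<forall>i<t. \<forall>j<t. i \<noteq> j \<longrightarrow> L i \<inter> L j = {}"
    and "\<forall>i<t. \<forall>\<mu>. \<forall>g\<in>clusterings (U i) (L i). \<forall>h\<in>clusterings (U i) (L i).
           cluster_equiv (L i) (U i) g h \<longrightarrow> Q i g \<mu> = Q i h \<mu>"
    and "\<forall>i<t. f i \<in> clusterings (U i) (L i) \<and>
           (\<forall>g\<in>clusterings (U i) (L i).
              Q i (f i) (cond_measure P (U i)) \<le> Q i g (cond_measure P (U i)) \<and>
              (Q i g (cond_measure P (U i)) = Q i (f i) (cond_measure P (U i))
                 \<longrightarrow> cluster_equiv (L i) (U i) g (f i)))"
    and "\<forall>i<t. \<forall>Y. \<forall>c\<in>sample_clusterings (length Y) (L i). \<forall>c'\<in>sample_clusterings (length Y) (L i).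
           cluster_equiv (L i) {..<length Y} c c' \<longrightarrow> Qm i Y c = Qm i Y c'"
    and "\<forall>i<t. \<forall>Y \<sigma>. \<forall>c\<in>sample_clusterings (length Y) (L i). \<sigma> permutes {..<length Y} \<longrightarrow>
           Qm i (map (\<lambda>k. Y ! \<sigma> k) [0..<length Y]) (restrict (c \<circ> \<sigma>) {..<length Y}) = Qm i Y c"
    and "\<forall>i<t. \<forall>Y. Y \<noteq> [] \<longrightarrow> set Y \<subseteq> U i \<longrightarrow>
           C i Y \<in> sample_clusterings (length Y) (L i) \<and>
           (\<forall>c\<in>sample_clusterings (length Y) (L i).
              Qm i Y (C i Y) \<le> Qm i Y c \<and>
              (Qm i Y c = Qm i Y (C i Y) \<longrightarrow> cluster_equiv (L i) {..<length Y} c (C i Y)))"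
    and "\<forall>i<t. c0 i \<in> L i"
    and "(\<lambda>(X', X''). D_M U L t (emp_mapper U C c0 n X') (emp_mapper U C c0 n X'')
            (map X' [0..<n] @ map X'' [0..<n]))
         \<in> borel_measurable (PiM {..<n} (\<lambda>_. P) \<Otimes>\<^sub>M PiM {..<n} (\<lambda>_. P))"
    and "{X \<in> space (PiM {..<n} (\<lambda>_. P)). D_bdry U L t (emp_mapper U C c0 n X) f > ereal \<gamma>}
         \<in> sets (PiM {..<n} (\<lambda>_. P))"
    and "\<gamma> \<ge> 0"
  shows "InStab U L t C c0 n P \<le>
     2 * (measure P (tube_map U L t f \<gamma>)
          + measure (PiM {..<n} (\<lambda>_. P))
              {X \<in> space (PiM {..<n} (\<lambda>_. P)). D_bdry U L t (emp_mapper U C c0 n X) f > ereal \<gamma>}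
          + measure (PiM {..<n} (\<lambda>_. P))
              {X \<in> space (PiM {..<n} (\<lambda>_. P)). \<exists>i<t. length (sub_sample U i n X) = 0})"
proof -
  have fin: "\<forall>i<t. finite (L i)"
    using assms(5) by blast
  have labels: "\<And>X i x. i < t \<Longrightarrow> x \<in> U i \<Longrightarrow> emp_mapper U C c0 n X i x \<in> L i"
    using assms(11,12) by (intro emp_mapper_in_labels) auto
  have "tube_map U L t f \<gamma> \<in> sets P"
    unfolding tube_map_def using assms(2,4) fin by (auto intro!: sets_borel_tube)
  then have "InStab U L t C c0 n P \<le> measure P (tube_map U L t f \<gamma>)
      + 2 * measure (PiM {..<n} (\<lambda>_. P))
          {X \<in> space (PiM {..<n} (\<lambda>_. P)). D_bdry U L t (emp_mapper U C c0 n X) f > ereal \<gamma>}"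
    unfolding InStab_def using integral_D_M_two_samples_le[where E = "emp_mapper U C c0 n",
          OF assms(1) fin assms(6) labels assms(15) _ assms(14)] by simp
  then show ?thesis
    by (smt (verit) measure_nonneg)
qed

end
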